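(* In the 2-sided error regime, there exists an algorithm that, given a moldgraph with $m$ edges, finds a realized spanning tree with high probability using $O(m\log m)$ queries. Moreover, no algorithm can do better than $\Omega(m\log m)$ queries.
   Context: Problem (graph connectivity with noisy queries): a graph $G=(V,E)$, the moldgraph, with $n$ vertices and $m$ edges is given. An adversary selects an arbitrary connected spanning subgraph $G'$ of $G$ to be realized; its edges are called realized. The algorithm does not observe $G'$, but may query an oracle on any edge $e\in E$ (``Is $e$ realized?''), receiving ``Yes'' or ``No''; each query costs $1$, and answers to distinct queries (including repeated queries of the same edge) are independent random. The goal is to output a spanning tree of $G$ all of whose edges are realized, using as few queries as possible. In the 2-sided error regime, each answer is wrong (``No'' for a realized edge, ``Yes'' for a non-realized edge) with a constant probability $p<1/2$. ``With high probability'' means with probability tending to $1$ as $m\to\infty$. The lower bound is a worst-case statement over moldgraphs and realized subgraphs, for algorithms succeeding with constant failure probability. *)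

theory Defs
  imports "HOL-Probability.Probability"
begin

text \<open>Adaptive, possibly randomized query algorithms as finite decision trees.
  Coin q k: internal random coin with bias q (no query cost).\<close>
datatype 'e alg = Output "'e set" | Query 'e "bool \<Rightarrow> 'e alg" | Coin real "bool \<Rightarrow> 'e alg"

primrec depth :: "'e alg \<Rightarrow> nat" where
  "depth (Output T) = 0"
| "depth (Query e k) = Suc (max (depth (k True)) (depth (k False)))"
| "depth (Coin q k) = max (depth (k True)) (depth (k False))"

text \<open>Output distribution in the 2-sided error regime with error probability p,
  realized edge set R: every query (also repeated ones) gets a fresh independent answer,
  which is correct with probability 1 - p.\<close>
primrec run :: "real \<Rightarrow> 'e set \<Rightarrow> 'e alg \<Rightarrow> 'e set pmf" where
  "run p R (Output T) = return_pmf T"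
| "run p R (Query e k) =
     bind_pmf (bernoulli_pmf (if e \<in> R then 1 - p else p)) (\<lambda>b. run p R (k b))"
| "run p R (Coin q k) = bind_pmf (bernoulli_pmf q) (\<lambda>b. run p R (k b))"

definition simple_graph :: "nat set \<Rightarrow> nat set set \<Rightarrow> bool" where
  "simple_graph V E \<longleftrightarrow> finite V \<and> (\<forall>e\<in>E. e \<subseteq> V \<and> card e = 2)"

definition adj :: "nat set set \<Rightarrow> (nat \<times> nat) set" where
  "adj F = {(x, y). {x, y} \<in> F}"

definition connects :: "nat set \<Rightarrow> nat set set \<Rightarrow> bool" where
  "connects V F \<longleftrightarrow> (\<forall>u\<in>V. \<forall>v\<in>V. (u, v) \<in> (adj F)\<^sup>*)"

definition acyclic_edges :: "nat set set \<Rightarrow> bool" where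
  "acyclic_edges F \<longleftrightarrow> (\<forall>e\<in>F. \<forall>u v. e = {u, v} \<longrightarrow> (u, v) \<notin> (adj (F - {e}))\<^sup>*)"

definition spanning_tree :: "nat set \<Rightarrow> nat set set \<Rightarrow> nat set set \<Rightarrow> bool" where
  "spanning_tree V E T \<longleftrightarrow> T \<subseteq> E \<and> connects V T \<and> acyclic_edges T"

definition realizable :: "nat set \<Rightarrow> nat set set \<Rightarrow> nat set set \<Rightarrow> bool" where
  "realizable V E R \<longleftrightarrow> R \<subseteq> E \<and> connects V R"

definition fail_prob :: "real \<Rightarrow> nat set \<Rightarrow> nat set set \<Rightarrow> nat set set \<Rightarrow> nat set alg \<Rightarrow> real" where
  "fail_prob p V E R t =
     measure_pmf.prob (run p R t) {T. \<not> (spanning_tree V E T \<and> T \<subseteq> R)}"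

end

theory Submission
  imports Defs
begin

text \<open>Upper bound: query every edge \<open>\<lceil>ln m / (1/2 - p)\<^sup>2\<rceil>\<close> times and keep the edges with a
  majority of Yes answers. By Hoeffding's inequality each vote errs with probability at most
  \<open>1/m\<^sup>2\<close>, so with probability at least \<open>1 - 1/m\<close> the kept edges are exactly the realized ones,
  and every spanning tree among them is realized.

  Lower bound: glue \<open>k = m div 3\<close> triangles at a common hub. A realization removes one of the two
  hub edges of each triangle; this choice \<open>x \<subseteq> {..<k}\<close> can be read off any realized spanning
  tree. A query concerns a single triangle \<open>i\<close> and changes the likelihood ratio of \<open>x\<close> and
  \<open>x\<close> with \<open>i\<close> flipped by a factor of at most \<open>p / (1 - p)\<close>. Tracking these ratios through the
  decision tree and applying AM-GM at the leaves shows that an algorithm of depth \<open>D\<close> failing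
  with probability at most \<open>\<epsilon>\<close> satisfies \<open>k (p / (1 - p))\<^bsup>D/k\<^esup> (1 - \<epsilon>) \<le> \<epsilon>\<close>, whence
  \<open>D = \<Omega>(k log k) = \<Omega>(m log m)\<close>.\<close>

section \<open>Majority votes\<close>

lemma prob_bind_pmf:
  "measure_pmf.prob (bind_pmf M f) A = measure_pmf.expectation M (\<lambda>x. measure_pmf.prob (f x) A)"
  unfolding measure_pmf_bind
  by (rule measure_pmf.measure_bind[where N="count_space UNIV"])
     (auto simp: space_subprob_algebra
       intro!: measure_pmf_in_subprob_space prob_space_imp_subprob_space measure_pmf.prob_space_axioms)

lemma prob_bind_bernoulli:
  "measure_pmf.prob (bind_pmf (bernoulli_pmf q) f) A =
     max 0 (min 1 q) * measure_pmf.prob (f True) A + (1 - max 0 (min 1 q)) * measure_pmf.prob (f False) A"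
proof -
  have "bernoulli_pmf q = bernoulli_pmf (max 0 (min 1 q))"
    by (rule pmf_eqI) (simp add: bernoulli_pmf.rep_eq)
  then show ?thesis by (simp add: prob_bind_pmf)
qed

lemma binomial_majority_error:
  fixes p :: real
  assumes "0 \<le> p" "p < 1/2"
  shows "measure_pmf.prob (binomial_pmf k (if b then 1 - p else p)) {j. (k < 2 * j) \<noteq> b}
           \<le> exp (- 2 * real k * (1/2 - p)\<^sup>2)"
proof (cases "k = 0")
  case True
  then show ?thesis by simp
next
  case False
  interpret binomial_distribution k "if b then 1 - p else p"
    using assms by unfold_locales auto
  have k: "0 < k" and margin: "0 \<le> 1/2 - p" using False assms by simp_all
  have "{j. (k < 2 * j) \<noteq> b}
          \<subseteq> (if b then {j. j / k \<le> (1 - p) - (1/2 - p)} else {j. j / k \<ge> p + (1/2 - p)})"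
    using False by (auto simp: field_simps)
  then show ?thesis
    using prob_le'[OF k margin] prob_ge'[OF k margin]
    by (cases b) (auto intro: order.trans[OF measure_pmf.finite_measure_mono])
qed

fun query_count :: "'e \<Rightarrow> nat \<Rightarrow> (nat \<Rightarrow> 'e alg) \<Rightarrow> 'e alg" where
  "query_count e 0 f = f 0"
| "query_count e (Suc k) f = Query e (\<lambda>b. query_count e k (\<lambda>j. f ((if b then 1 else 0) + j)))"

lemma depth_query_count: "(\<And>j. depth (f j) \<le> D) \<Longrightarrow> depth (query_count e k f) \<le> k + D"
  by (induction k arbitrary: f) (auto simp: max_def)

lemma run_query_count:
  assumes "0 \<le> p" "p \<le> 1"
  shows "run p R (query_count e k f) =
           bind_pmf (binomial_pmf k (if e \<in> R then 1 - p else p)) (\<lambda>j. run p R (f j))"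
proof (induction k arbitrary: f)
  case 0
  then show ?case using assms by (simp add: binomial_pmf_0 bind_return_pmf)
next
  case (Suc k)
  have "(if e \<in> R then 1 - p else p) \<in> {0..1}" using assms by auto
  then show ?case
    by (simp add: Suc binomial_pmf_Suc bind_assoc_pmf bind_return_pmf)
qed

definition majority_query :: "'e \<Rightarrow> nat \<Rightarrow> (bool \<Rightarrow> 'e alg) \<Rightarrow> 'e alg" where
  "majority_query e k f = query_count e k (\<lambda>j. f (k < 2 * j))"

lemma depth_majority_query:
  "depth (majority_query e k f) \<le> k + max (depth (f True)) (depth (f False))"
  unfolding majority_query_def by (rule depth_query_count) (metis (full_types) max.cobounded1 max.cobounded2)

lemma prob_run_majority_query:
  fixes p :: real
  assumes "0 \<le> p" "p < 1/2"
  shows "measure_pmf.prob (run p R (majority_query e k f)) B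
           \<le> measure_pmf.prob (run p R (f (e \<in> R))) B + exp (- 2 * real k * (1/2 - p)\<^sup>2)"
proof -
  let ?M = "binomial_pmf k (if e \<in> R then 1 - p else p)"
  let ?wrong = "{j. (k < 2 * j) \<noteq> (e \<in> R)}"
  have q: "(if e \<in> R then 1 - p else p) \<in> {0..1}" using assms by auto
  have "measure_pmf.prob (run p R (majority_query e k f)) B
          = measure_pmf.expectation ?M (\<lambda>j. measure_pmf.prob (run p R (f (k < 2 * j))) B)"
    using assms by (simp add: majority_query_def run_query_count prob_bind_pmf)
  also have "\<dots> \<le> measure_pmf.expectation ?M
                   (\<lambda>j. measure_pmf.prob (run p R (f (e \<in> R))) B + indicator ?wrong j)"
    using q by (intro integral_mono)
      (auto simp: indicator_def intro: add_increasing measure_pmf.prob_le_1)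
  also have "\<dots> = measure_pmf.prob (run p R (f (e \<in> R))) B + measure_pmf.prob ?M ?wrong"
    using q by (simp add: Bochner_Integration.integral_add measure_pmf.prob_space)
  also have "\<dots> \<le> measure_pmf.prob (run p R (f (e \<in> R))) B + exp (- 2 * real k * (1/2 - p)\<^sup>2)"
    using binomial_majority_error[OF assms] by simp
  finally show ?thesis .
qed

fun majority_filter :: "nat \<Rightarrow> 'e list \<Rightarrow> ('e set \<Rightarrow> 'e alg) \<Rightarrow> 'e set \<Rightarrow> 'e alg" where
  "majority_filter k [] out S = out S"
| "majority_filter k (e # es) out S =
     majority_query e k (\<lambda>b. majority_filter k es out (if b then insert e S else S))"

lemma depth_majority_filter:
  assumes "\<And>S. depth (out S) = 0"
  shows "depth (majority_filter k es out S) \<le> length es * k"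
proof (induction es arbitrary: S)
  case Nil
  then show ?case using assms by simp
next
  case (Cons e es)
  show ?case
    using depth_majority_query[of e k "\<lambda>b. majority_filter k es out (if b then insert e S else S)"]
      Cons[of "insert e S"] Cons[of S]
    by simp
qed

lemma prob_run_majority_filter:
  fixes p :: real
  assumes "0 \<le> p" "p < 1/2"
  shows "measure_pmf.prob (run p R (majority_filter k es out S)) B
           \<le> length es * exp (- 2 * real k * (1/2 - p)\<^sup>2)
             + measure_pmf.prob (run p R (out (S \<union> (R \<inter> set es)))) B"
proof (induction es arbitrary: S)
  case Nil
  then show ?case by simp
next
  case (Cons e es)
  let ?\<beta> = "exp (- 2 * real k * (1/2 - p)\<^sup>2)"
  let ?S' = "if e \<in> R then insert e S else S"
  have "measure_pmf.prob (run p R (majority_filter k (e # es) out S)) B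
          \<le> measure_pmf.prob (run p R (majority_filter k es out ?S')) B + ?\<beta>"
    using prob_run_majority_query[OF assms, of R e k
        "\<lambda>b. majority_filter k es out (if b then insert e S else S)" B]
    by simp
  also have "\<dots> \<le> length es * ?\<beta> + measure_pmf.prob (run p R (out (?S' \<union> (R \<inter> set es)))) B + ?\<beta>"
    using Cons.IH by simp
  also have "?S' \<union> (R \<inter> set es) = S \<union> (R \<inter> set (e # es))"
    by auto
  finally show ?case
    by (simp add: algebra_simps)
qed

section \<open>The majority spanning tree algorithm\<close>

lemma adj_sym: "(x, y) \<in> adj F \<Longrightarrow> (y, x) \<in> adj F"
  by (auto simp: adj_def insert_commute)

lemma rtrancl_adj_sym: "(x, y) \<in> (adj F)\<^sup>* \<Longrightarrow> (y, x) \<in> (adj F)\<^sup>*"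
  by (induction rule: rtrancl_induct) (auto intro: converse_rtrancl_into_rtrancl adj_sym)

lemma edge_in_rtrancl_adj: "{u, v} \<in> F \<Longrightarrow> (u, v) \<in> (adj F)\<^sup>*"
  by (auto simp: adj_def)

lemma rtrancl_adj_Diff_cycle_edge:
  assumes "e \<in> F" "e = {u, v}" "(u, v) \<in> (adj (F - {e}))\<^sup>*"
  shows "(adj F)\<^sup>* = (adj (F - {e}))\<^sup>*"
proof (rule antisym)
  show "(adj F)\<^sup>* \<subseteq> (adj (F - {e}))\<^sup>*"
  proof (rule rtrancl_subset_rtrancl, safe)
    fix x y assume xy: "(x, y) \<in> adj F"
    show "(x, y) \<in> (adj (F - {e}))\<^sup>*"
    proof (cases "{x, y} = e")
      case True
      then have "(x = u \<and> y = v) \<or> (x = v \<and> y = u)"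
        using assms(2) by (auto simp: doubleton_eq_iff)
      then show ?thesis using assms(3) rtrancl_adj_sym by blast
    next
      case False
      then show ?thesis using xy by (auto simp: adj_def)
    qed
  qed
  show "(adj (F - {e}))\<^sup>* \<subseteq> (adj F)\<^sup>*"
    by (rule rtrancl_mono) (auto simp: adj_def)
qed

text \<open>A connecting edge set of minimum cardinality has no cycle edge.\<close>
lemma ex_acyclic_connecting_subset:
  assumes "finite R" "connects V R"
  shows "\<exists>T \<subseteq> R. connects V T \<and> acyclic_edges T"
proof -
  obtain T where T: "T \<subseteq> R" "connects V T"
    and min: "\<And>T'. T' \<subseteq> R \<Longrightarrow> connects V T' \<Longrightarrow> card T \<le> card T'"
    using ex_has_least_nat[of "\<lambda>T. T \<subseteq> R \<and> connects V T" R card] assms(2) by auto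
  have "acyclic_edges T"
    unfolding acyclic_edges_def
  proof (intro ballI allI impI notI)
    fix e u v assume e: "e \<in> T" "e = {u, v}" "(u, v) \<in> (adj (T - {e}))\<^sup>*"
    then have "connects V (T - {e})"
      using T(2) rtrancl_adj_Diff_cycle_edge[OF e] unfolding connects_def by simp
    moreover have "card (T - {e}) < card T"
      using e(1) T(1) assms(1) by (meson card_Diff1_less finite_subset)
    ultimately show False
      using min[of "T - {e}"] T(1) by auto
  qed
  then show ?thesis using T by blast
qed

lemma simple_graph_finite_edges: "simple_graph V E \<Longrightarrow> finite E"
  unfolding simple_graph_def by (meson Pow_iff finite_Pow_iff finite_subset subsetI)

definition repetitions :: "real \<Rightarrow> nat \<Rightarrow> nat" where
  "repetitions p m = nat \<lceil>ln (real m) / (1/2 - p)\<^sup>2\<rceil>"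

lemma exp_repetitions_le:
  fixes p :: real
  assumes "p < 1/2" "1 \<le> m"
  shows "exp (- 2 * real (repetitions p m) * (1/2 - p)\<^sup>2) \<le> 1 / (real m)\<^sup>2"
proof -
  have \<gamma>: "0 < (1/2 - p)\<^sup>2" using assms by simp
  have "ln (real m) / (1/2 - p)\<^sup>2 \<le> real (repetitions p m)"
    unfolding repetitions_def by linarith
  then have "- 2 * real (repetitions p m) * (1/2 - p)\<^sup>2 \<le> - 2 * ln (real m)"
    using \<gamma> by (simp add: field_simps)
  then have "exp (- 2 * real (repetitions p m) * (1/2 - p)\<^sup>2) \<le> exp (- 2 * ln (real m))"
    by simp
  also have "- 2 * ln (real m) = - ln ((real m)\<^sup>2)"
    using assms by (simp add: ln_realpow)
  also have "exp (- ln ((real m)\<^sup>2)) = 1 / (real m)\<^sup>2"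
    using assms by (simp add: exp_minus inverse_eq_divide)
  finally show ?thesis .
qed

lemma repetitions_le:
  fixes p :: real
  assumes "1 \<le> m"
  shows "real (repetitions p m) \<le> ln (real m) / (1/2 - p)\<^sup>2 + 1"
proof -
  have "0 \<le> ln (real m) / (1/2 - p)\<^sup>2" using assms by simp
  then show ?thesis
    unfolding repetitions_def using of_int_ceiling_le_add_one[of "ln (real m) / (1/2 - p)\<^sup>2"]
    by simp
qed

definition enumeration :: "'a set \<Rightarrow> 'a list" where
  "enumeration A = (SOME xs. set xs = A \<and> distinct xs)"

lemma set_distinct_enumeration: "finite A \<Longrightarrow> set (enumeration A) = A \<and> distinct (enumeration A)"
  unfolding enumeration_def by (rule someI_ex) (rule finite_distinct_list)

lemma set_enumeration: "finite A \<Longrightarrow> set (enumeration A) = A"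
  using set_distinct_enumeration by blast

lemma length_enumeration: "finite A \<Longrightarrow> length (enumeration A) = card A"
  using set_distinct_enumeration distinct_card by metis

definition majority_spanning_tree :: "real \<Rightarrow> nat set \<Rightarrow> nat set set \<Rightarrow> nat set alg" where
  "majority_spanning_tree p V E =
     majority_filter (repetitions p (card E)) (enumeration E)
       (\<lambda>S. Output (SOME T. spanning_tree V E T \<and> T \<subseteq> S)) {}"

lemma depth_majority_spanning_tree:
  fixes p :: real
  assumes "finite E" "2 \<le> card E"
  shows "real (depth (majority_spanning_tree p V E))
           \<le> (1 / (1/2 - p)\<^sup>2 + 1 / ln 2) * real (card E) * ln (real (card E))"
proof -
  define m where "m = card E"
  have ln2: "1 \<le> ln (real m) / ln 2" using assms by (simp add: m_def)
  have "depth (majority_spanning_tree p V E) \<le> length (enumeration E) * repetitions p m"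
    unfolding majority_spanning_tree_def m_def by (rule depth_majority_filter) simp
  then have "depth (majority_spanning_tree p V E) \<le> m * repetitions p m"
    using length_enumeration[OF assms(1)] by (simp add: m_def)
  then have "real (depth (majority_spanning_tree p V E)) \<le> real m * real (repetitions p m)"
    by (metis of_nat_le_iff of_nat_mult)
  also have "\<dots> \<le> real m * (ln (real m) / (1/2 - p)\<^sup>2 + ln (real m) / ln 2)"
  proof (rule mult_left_mono)
    show "real (repetitions p m) \<le> ln (real m) / (1/2 - p)\<^sup>2 + ln (real m) / ln 2"
      using repetitions_le[of m p] ln2 assms(2) unfolding m_def by linarith
  qed simp
  also have "\<dots> = (1 / (1/2 - p)\<^sup>2 + 1 / ln 2) * real m * ln (real m)"
    by (simp add: field_simps)
  finally show ?thesis unfolding m_def .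
qed

lemma fail_prob_majority_spanning_tree:
  fixes p :: real
  assumes "finite E" "realizable V E R" "0 \<le> p" "p < 1/2"
  shows "fail_prob p V E R (majority_spanning_tree p V E) \<le> 1 / real (card E)"
proof -
  define m where "m = card E"
  define es where "es = enumeration E"
  let ?out = "\<lambda>S. Output (SOME T. spanning_tree V E T \<and> T \<subseteq> S)"
  let ?bad = "{T. \<not> (spanning_tree V E T \<and> T \<subseteq> R)}"
  have R: "R \<subseteq> E" "connects V R" using assms(2) unfolding realizable_def by auto
  then have "\<exists>T. spanning_tree V E T \<and> T \<subseteq> R"
    using ex_acyclic_connecting_subset[of R V] finite_subset[OF R(1) assms(1)]
    unfolding spanning_tree_def by blast
  then have "spanning_tree V E (SOME T. spanning_tree V E T \<and> T \<subseteq> R)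
              \<and> (SOME T. spanning_tree V E T \<and> T \<subseteq> R) \<subseteq> R"
    by (rule someI_ex)
  moreover have "{} \<union> (R \<inter> set es) = R"
    using R(1) set_enumeration[OF assms(1)] by (auto simp: es_def)
  ultimately have out_ok: "measure_pmf.prob (run p R (?out ({} \<union> (R \<inter> set es)))) ?bad = 0"
    by simp
  have "fail_prob p V E R (majority_spanning_tree p V E)
          = measure_pmf.prob (run p R (majority_filter (repetitions p m) es ?out {})) ?bad"
    unfolding fail_prob_def majority_spanning_tree_def es_def m_def ..
  also have "\<dots> \<le> length es * exp (- 2 * real (repetitions p m) * (1/2 - p)\<^sup>2)
                   + measure_pmf.prob (run p R (?out ({} \<union> (R \<inter> set es)))) ?bad"
    by (rule prob_run_majority_filter[OF assms(3,4)])
  also have "\<dots> = real m * exp (- 2 * real (repetitions p m) * (1/2 - p)\<^sup>2)"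
    using out_ok length_enumeration[OF assms(1)] by (simp add: es_def m_def)
  also have "\<dots> \<le> 1 / real m"
  proof (cases "m = 0")
    case False
    then have "real m * exp (- 2 * real (repetitions p m) * (1/2 - p)\<^sup>2) \<le> real m * (1 / (real m)\<^sup>2)"
      using exp_repetitions_le[OF assms(4), of m] by (intro mult_left_mono) auto
    then show ?thesis using False by (simp add: power2_eq_square)
  qed simp
  finally show ?thesis unfolding m_def .
qed

section \<open>Lower bound for instance families indexed by a hypercube\<close>

definition flip :: "nat \<Rightarrow> nat set \<Rightarrow> nat set" where
  "flip i x = (if i \<in> x then x - {i} else insert i x)"

lemma flip_subset: "x \<subseteq> {..<k} \<Longrightarrow> i < k \<Longrightarrow> flip i x \<subseteq> {..<k}"
  unfolding flip_def by auto

lemma flip_neq: "flip i x \<noteq> x"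
  unfolding flip_def by auto

lemma inj_flip: "inj (\<lambda>i. flip i x)"
  unfolding inj_def flip_def by (auto split: if_splits)

text \<open>A lower bound for algorithms distinguishing the \<open>2\<^sup>k\<close> instances \<open>R x\<close>, \<open>x \<subseteq> {..<k}\<close>,
  when every query concerns a single coordinate: each answer changes the likelihood ratio of
  \<open>x\<close> and \<open>flip i x\<close> by at most the odds \<open>p / (1 - p)\<close>, and only for \<open>i = coord e\<close>.\<close>
locale hypercube_instances =
  fixes p :: real and k :: nat
    and R :: "nat set \<Rightarrow> 'e set" and coord :: "'e \<Rightarrow> nat" and decode :: "'e set \<Rightarrow> nat set"
  assumes error_prob: "0 < p" "p < 1/2"
    and R_flip: "\<And>i x e. i \<noteq> coord e \<Longrightarrow> e \<in> R (flip i x) \<longleftrightarrow> e \<in> R x"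
    and decode_subset: "\<And>T. decode T \<subseteq> {..<k}"
begin

definition odds :: real where
  "odds = p / (1 - p)"

definition success_prob :: "'e alg \<Rightarrow> nat set \<Rightarrow> real" where
  "success_prob t x = measure_pmf.prob (run p (R x) t) {T. decode T = x}"

definition weighted_success :: "'e alg \<Rightarrow> (nat set \<Rightarrow> real) \<Rightarrow> real" where
  "weighted_success t w = (\<Sum>x\<in>Pow {..<k}. w x * success_prob t x)"

definition weighted_failure :: "'e alg \<Rightarrow> (nat set \<Rightarrow> real) \<Rightarrow> real" where
  "weighted_failure t w = (\<Sum>x\<in>Pow {..<k}. w x * (1 - success_prob t x))"

text \<open>In the lower bound, \<open>w x\<close> is the likelihood of the answers seen so far under the
  instance \<open>R x\<close> and \<open>n i\<close> counts the queries made so far about coordinate \<open>i\<close>.\<close>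

definition flip_ratio_bounded :: "(nat set \<Rightarrow> real) \<Rightarrow> (nat \<Rightarrow> nat) \<Rightarrow> bool" where
  "flip_ratio_bounded w n \<longleftrightarrow>
     (\<forall>x \<subseteq> {..<k}. 0 \<le> w x \<and> (\<forall>i<k. odds ^ n i * w x \<le> w (flip i x)))"

definition balanced_odds :: "nat \<Rightarrow> real" where
  "balanced_odds s = real k * odds powr (real s / real k)"

lemma odds_pos: "0 < odds" and odds_less_1: "odds < 1"
  using error_prob by (auto simp: odds_def divide_less_eq)

lemma odds_mult_le:
  assumes "a \<in> {p, 1 - p}" "b \<in> {p, 1 - p}"
  shows "odds * a \<le> b"
proof -
  have "odds * (1 - p) = p" using error_prob by (simp add: odds_def)
  moreover have "odds * p \<le> odds * (1 - p)" using error_prob odds_pos by simp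
  ultimately have "odds * p \<le> p" "odds * p \<le> 1 - p" "odds * (1 - p) \<le> p" "odds * (1 - p) \<le> 1 - p"
    using error_prob by linarith+
  then show ?thesis using assms by auto
qed

lemma balanced_odds_le_sum: "balanced_odds (\<Sum>i<k. n i) \<le> (\<Sum>i<k. odds ^ n i)"
proof (cases "k = 0")
  case False
  have "(\<Prod>i<k. odds ^ n i) powr (1 / real k) \<le> (\<Sum>i<k. odds ^ n i / real k)"
    using arith_geom_mean[of "{..<k}" "\<lambda>i. odds ^ n i"] False odds_pos by (simp add: lessThan_empty_iff)
  moreover have "(\<Prod>i<k. odds ^ n i) = odds powr real (\<Sum>i<k. n i)"
    using odds_pos by (subst powr_realpow) (simp_all add: power_sum)
  then have "(\<Prod>i<k. odds ^ n i) powr (1 / real k) = odds powr (real (\<Sum>i<k. n i) / real k)"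
    by (simp add: powr_powr)
  ultimately show ?thesis
    using False by (simp add: balanced_odds_def sum_divide_distrib[symmetric] field_simps)
qed (unfold balanced_odds_def, simp)

lemma balanced_odds_antimono: "s \<le> s' \<Longrightarrow> balanced_odds s' \<le> balanced_odds s"
  using odds_pos odds_less_1 unfolding balanced_odds_def
  by (intro mult_left_mono powr_mono') (auto simp: divide_right_mono)

lemma balanced_odds_nonneg: "0 \<le> balanced_odds s"
  unfolding balanced_odds_def by simp

lemma flip_ratio_bounded_mult:
  assumes "flip_ratio_bounded w n"
    and "\<And>x. x \<subseteq> {..<k} \<Longrightarrow> 0 \<le> f x"
    and "\<And>x i. x \<subseteq> {..<k} \<Longrightarrow> i < k \<Longrightarrow> odds ^ d i * f x \<le> f (flip i x)"
  shows "flip_ratio_bounded (\<lambda>x. w x * f x) (\<lambda>i. n i + d i)"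
  unfolding flip_ratio_bounded_def
proof (intro allI impI conjI)
  fix x i assume x: "x \<subseteq> {..<k}"
  show "0 \<le> w x * f x" using assms x unfolding flip_ratio_bounded_def by auto
  assume i: "i < k"
  have "odds ^ (n i + d i) * (w x * f x) = (odds ^ n i * w x) * (odds ^ d i * f x)"
    by (simp add: power_add mult_ac)
  also have "\<dots> \<le> w (flip i x) * f (flip i x)"
    using assms x i flip_subset[OF x i] odds_pos unfolding flip_ratio_bounded_def
    by (intro mult_mono) auto
  finally show "odds ^ (n i + d i) * (w x * f x) \<le> w (flip i x) * f (flip i x)" .
qed

lemma success_prob_nonneg: "0 \<le> success_prob t x"
  unfolding success_prob_def by simp

lemma weighted_success_nonneg:
  "flip_ratio_bounded w n \<Longrightarrow> 0 \<le> weighted_success t w"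
  unfolding weighted_success_def flip_ratio_bounded_def
  by (auto intro!: sum_nonneg mult_nonneg_nonneg success_prob_nonneg)

lemma weighted_bound_Output:
  assumes w: "flip_ratio_bounded w n"
  shows "balanced_odds (\<Sum>i<k. n i) * weighted_success (Output T) w \<le> weighted_failure (Output T) w"
proof -
  define y where "y = decode T"
  have y: "y \<subseteq> {..<k}" unfolding y_def by (rule decode_subset)
  have w_nonneg: "\<And>x. x \<subseteq> {..<k} \<Longrightarrow> 0 \<le> w x"
    and w_flip: "\<And>i. i < k \<Longrightarrow> odds ^ n i * w y \<le> w (flip i y)"
    using w y unfolding flip_ratio_bounded_def by auto
  have success: "success_prob (Output T) x = (if x = y then 1 else 0)" for x
    by (simp add: success_prob_def y_def)
  have "weighted_success (Output T) w = w y"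
    using y by (simp add: weighted_success_def success if_distrib sum.delta cong: if_cong)
  then have "balanced_odds (\<Sum>i<k. n i) * weighted_success (Output T) w \<le> (\<Sum>i<k. odds ^ n i) * w y"
    using balanced_odds_le_sum w_nonneg[OF y] by (simp add: mult_right_mono)
  also have "\<dots> \<le> (\<Sum>i<k. w (flip i y))"
    unfolding sum_distrib_right using w_flip by (intro sum_mono) simp
  also have "\<dots> = (\<Sum>x\<in>(\<lambda>i. flip i y) ` {..<k}. w x)"
    by (simp add: sum.reindex inj_on_subset[OF inj_flip])
  also have "\<dots> \<le> (\<Sum>x\<in>Pow {..<k} - {y}. w x)"
    using flip_subset[OF y] flip_neq w_nonneg by (intro sum_mono2) auto
  also have "\<dots> = weighted_failure (Output T) w"
    using y by (simp add: weighted_failure_def success sum.If_cases Diff_eq if_distrib cong: if_cong)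
  finally show ?thesis .
qed

lemma weighted_bound_step:
  assumes success:
      "\<And>x. success_prob t x = q x * success_prob (g True) x + (1 - q x) * success_prob (g False) x"
    and q: "\<And>x. 0 \<le> q x" "\<And>x. q x \<le> 1"
    and q_flip: "\<And>x i. x \<subseteq> {..<k} \<Longrightarrow> i < k \<Longrightarrow>
                   odds ^ d i * q x \<le> q (flip i x) \<and> odds ^ d i * (1 - q x) \<le> 1 - q (flip i x)"
    and depth: "\<And>b. (\<Sum>i<k. d i) + depth (g b) \<le> depth t"
    and IH: "\<And>b w n. flip_ratio_bounded w n \<Longrightarrow>
               balanced_odds ((\<Sum>i<k. n i) + depth (g b)) * weighted_success (g b) w
                 \<le> weighted_failure (g b) w"
    and w: "flip_ratio_bounded w n"
  shows "balanced_odds ((\<Sum>i<k. n i) + depth t) * weighted_success t w \<le> weighted_failure t w"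
proof -
  define w1 where "w1 = (\<lambda>x. w x * q x)"
  define w0 where "w0 = (\<lambda>x. w x * (1 - q x))"
  define n' where "n' = (\<lambda>i. n i + d i)"
  have w1: "flip_ratio_bounded w1 n'" and w0: "flip_ratio_bounded w0 n'"
    unfolding w1_def w0_def n'_def using q q_flip
    by (auto intro!: flip_ratio_bounded_mult[OF w])
  have mono: "balanced_odds ((\<Sum>i<k. n i) + depth t) \<le> balanced_odds ((\<Sum>i<k. n' i) + depth (g b))"
    for b using depth[of b] by (intro balanced_odds_antimono) (simp add: n'_def sum.distrib)
  have "weighted_success t w = weighted_success (g True) w1 + weighted_success (g False) w0"
    unfolding weighted_success_def w1_def w0_def success
    by (simp add: sum.distrib[symmetric] algebra_simps)
  then have "balanced_odds ((\<Sum>i<k. n i) + depth t) * weighted_success t w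
      \<le> balanced_odds ((\<Sum>i<k. n' i) + depth (g True)) * weighted_success (g True) w1
        + balanced_odds ((\<Sum>i<k. n' i) + depth (g False)) * weighted_success (g False) w0"
    using mono weighted_success_nonneg[OF w1] weighted_success_nonneg[OF w0]
    by (simp add: distrib_left add_mono mult_right_mono)
  also have "\<dots> \<le> weighted_failure (g True) w1 + weighted_failure (g False) w0"
    using IH[OF w1] IH[OF w0] by (rule add_mono)
  also have "\<dots> = weighted_failure t w"
    unfolding weighted_failure_def w1_def w0_def success
    by (simp add: sum.distrib[symmetric] algebra_simps)
  finally show ?thesis .
qed

lemma weighted_success_le_failure:
  "flip_ratio_bounded w n \<Longrightarrow>
     balanced_odds ((\<Sum>i<k. n i) + depth t) * weighted_success t w \<le> weighted_failure t w"
proof (induction t arbitrary: w n)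
  case (Output T)
  then show ?case using weighted_bound_Output by simp
next
  case (Query e g)
  let ?q = "\<lambda>x. if e \<in> R x then 1 - p else p"
  show ?case
  proof (rule weighted_bound_step[where q = ?q and d = "\<lambda>i. if i = coord e then 1 else 0"])
    show "success_prob (Query e g) x
            = ?q x * success_prob (g True) x + (1 - ?q x) * success_prob (g False) x" for x
      using error_prob by (simp add: success_prob_def prob_bind_bernoulli)
    show "odds ^ (if i = coord e then 1 else 0) * ?q x \<le> ?q (flip i x)
          \<and> odds ^ (if i = coord e then 1 else 0) * (1 - ?q x) \<le> 1 - ?q (flip i x)" for x i
      using R_flip[of i e x] odds_mult_le by auto
    show "(\<Sum>i<k. if i = coord e then 1 else 0) + depth (g b) \<le> depth (Query e g)" for b
      by (cases b) auto
  qed (use error_prob Query in auto)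
next
  case (Coin c g)
  let ?q = "\<lambda>x. max 0 (min 1 c)"
  show ?case
  proof (rule weighted_bound_step[where q = ?q and d = "\<lambda>i. 0"])
    show "success_prob (Coin c g) x
            = ?q x * success_prob (g True) x + (1 - ?q x) * success_prob (g False) x" for x
      by (simp add: success_prob_def prob_bind_bernoulli)
    show "(\<Sum>i<k. 0) + depth (g b) \<le> depth (Coin c g)" for b
      by (cases b) auto
  qed (use Coin in auto)
qed

lemma balanced_odds_bound:
  assumes err: "\<And>x. x \<subseteq> {..<k} \<Longrightarrow> measure_pmf.prob (run p (R x) t) {T. decode T \<noteq> x} \<le> \<epsilon>"
  shows "balanced_odds (depth t) * (1 - \<epsilon>) \<le> \<epsilon>"
proof -
  have success: "success_prob t x = 1 - measure_pmf.prob (run p (R x) t) {T. decode T \<noteq> x}" for x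
  proof -
    have "{T. decode T = x} = UNIV - {T. decode T \<noteq> x}" by auto
    then show ?thesis
      using measure_pmf.prob_compl[of "{T. decode T \<noteq> x}" "run p (R x) t"]
      by (simp add: success_prob_def)
  qed
  define N where "N = real (card (Pow {..<k::nat}))"
  have "N * (1 - \<epsilon>) \<le> weighted_success t (\<lambda>_. 1)"
    unfolding weighted_success_def N_def
    using sum_mono[of "Pow {..<k}" "\<lambda>_. 1 - \<epsilon>" "success_prob t"] err by (simp add: success)
  then have "balanced_odds (depth t) * (N * (1 - \<epsilon>)) \<le> weighted_failure t (\<lambda>_. 1)"
    using weighted_success_le_failure[of "\<lambda>_. 1" "\<lambda>_. 0" t]
    by (auto simp: flip_ratio_bounded_def intro: order.trans[OF mult_left_mono] balanced_odds_nonneg)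
  also have "\<dots> \<le> N * \<epsilon>"
    unfolding weighted_failure_def N_def
    using sum_mono[of "Pow {..<k}" "\<lambda>x. 1 - success_prob t x" "\<lambda>_. \<epsilon>"] err by (simp add: success)
  finally show ?thesis
    by (simp add: N_def card_Pow mult.left_commute)
qed

lemma depth_lower_bound:
  assumes \<epsilon>: "0 < \<epsilon>" "\<epsilon> < 1"
    and err: "\<And>x. x \<subseteq> {..<k} \<Longrightarrow> measure_pmf.prob (run p (R x) t) {T. decode T \<noteq> x} \<le> \<epsilon>"
  shows "real k * (ln (real k) - ln (\<epsilon> / (1 - \<epsilon>))) \<le> real (depth t) * ln ((1 - p) / p)"
proof (cases "k = 0")
  case True
  then show ?thesis using error_prob by simp
next
  case False
  have ln_odds: "ln odds = - ln ((1 - p) / p)"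
    using error_prob by (simp add: odds_def ln_div)
  have "ln (balanced_odds (depth t) * (1 - \<epsilon>)) \<le> ln \<epsilon>"
    using balanced_odds_bound[OF err] \<epsilon> False odds_pos by (simp add: balanced_odds_def)
  then have "ln (real k) - real (depth t) / real k * ln ((1 - p) / p) + ln (1 - \<epsilon>) \<le> ln \<epsilon>"
    using \<epsilon> False odds_pos by (simp add: balanced_odds_def ln_mult ln_powr ln_odds)
  then have "ln (real k) - ln (\<epsilon> / (1 - \<epsilon>)) \<le> real (depth t) / real k * ln ((1 - p) / p)"
    using \<epsilon> by (simp add: ln_div)
  then show ?thesis
    using False by (simp add: field_simps)
qed

end

section \<open>The triangle fan\<close>

text \<open>The hard instances: \<open>k\<close> triangles \<open>{0, 2i+1, 2i+2}\<close> sharing the hub \<open>0\<close>, plus \<open>r\<close> pendant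
  edges at the hub.\<close>

definition hub_edge_a :: "nat \<Rightarrow> nat set" where "hub_edge_a i = {0, 2 * i + 1}"
definition hub_edge_b :: "nat \<Rightarrow> nat set" where "hub_edge_b i = {0, 2 * i + 2}"
definition rim_edge :: "nat \<Rightarrow> nat set" where "rim_edge i = {2 * i + 1, 2 * i + 2}"
definition pendant_edge :: "nat \<Rightarrow> nat \<Rightarrow> nat set" where "pendant_edge k j = {0, 2 * k + 1 + j}"

definition fan_vertices :: "nat \<Rightarrow> nat \<Rightarrow> nat set" where
  "fan_vertices k r = {..2 * k + r}"

definition fan_edges :: "nat \<Rightarrow> nat \<Rightarrow> nat set set" where
  "fan_edges k r = hub_edge_a ` {..<k} \<union> hub_edge_b ` {..<k} \<union> rim_edge ` {..<k} \<union> pendant_edge k ` {..<r}"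

definition fan_realization :: "nat \<Rightarrow> nat \<Rightarrow> nat set \<Rightarrow> nat set set" where
  "fan_realization k r x = fan_edges k r - hub_edge_a ` ({..<k} - x) - hub_edge_b ` x"

definition fan_decode :: "nat \<Rightarrow> nat set set \<Rightarrow> nat set" where
  "fan_decode k T = {i. i < k \<and> hub_edge_a i \<in> T}"

definition triangle_index :: "nat set \<Rightarrow> nat" where
  "triangle_index e = (Max e - 1) div 2"

lemma fan_edge_eq_iff [simp]:
  "hub_edge_a i = hub_edge_a j \<longleftrightarrow> i = j" "hub_edge_b i = hub_edge_b j \<longleftrightarrow> i = j"
  "rim_edge i = rim_edge j \<longleftrightarrow> i = j" "pendant_edge k i = pendant_edge k j \<longleftrightarrow> i = j"
  by (auto simp: hub_edge_a_def hub_edge_b_def rim_edge_def pendant_edge_def doubleton_eq_iff)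

lemma fan_edges_distinct [simp]:
  "hub_edge_a i \<noteq> hub_edge_b j" "hub_edge_a i \<noteq> rim_edge j" "hub_edge_b i \<noteq> rim_edge j"
  "rim_edge i \<noteq> pendant_edge k j"
  "i < k \<Longrightarrow> hub_edge_a i \<noteq> pendant_edge k j" "i < k \<Longrightarrow> hub_edge_b i \<noteq> pendant_edge k j"
  by (auto simp: hub_edge_a_def hub_edge_b_def rim_edge_def pendant_edge_def doubleton_eq_iff; presburger)+

lemmas fan_edges_distinct_sym [simp] = fan_edges_distinct[THEN not_sym]

lemma triangle_index_hub_edge [simp]:
  "triangle_index (hub_edge_a i) = i" "triangle_index (hub_edge_b i) = i"
  by (simp_all add: triangle_index_def hub_edge_a_def hub_edge_b_def)

lemma card_fan_edges: "card (fan_edges k r) = 3 * k + r"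
proof -
  have "card (hub_edge_a ` {..<k} \<union> hub_edge_b ` {..<k}) = 2 * k"
    by (subst card_Un_disjoint) (auto simp: card_image inj_on_def)
  moreover have "card (hub_edge_a ` {..<k} \<union> hub_edge_b ` {..<k} \<union> rim_edge ` {..<k})
                   = card (hub_edge_a ` {..<k} \<union> hub_edge_b ` {..<k}) + k"
    by (subst card_Un_disjoint) (auto simp: card_image inj_on_def)
  moreover have "card (fan_edges k r)
                   = card (hub_edge_a ` {..<k} \<union> hub_edge_b ` {..<k} \<union> rim_edge ` {..<k}) + r"
    unfolding fan_edges_def by (subst card_Un_disjoint) (auto simp: card_image inj_on_def)
  ultimately show ?thesis by simp
qed

lemma simple_graph_fan: "simple_graph (fan_vertices k r) (fan_edges k r)"
  unfolding simple_graph_def fan_vertices_def fan_edges_def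
  by (auto simp: hub_edge_a_def hub_edge_b_def rim_edge_def pendant_edge_def)

lemma fan_realization_iff:
  assumes "x \<subseteq> {..<k}"
  shows "i < k \<Longrightarrow> hub_edge_a i \<in> fan_realization k r x \<longleftrightarrow> i \<in> x"
    and "i < k \<Longrightarrow> hub_edge_b i \<in> fan_realization k r x \<longleftrightarrow> i \<notin> x"
    and "i < k \<Longrightarrow> rim_edge i \<in> fan_realization k r x"
    and "j < r \<Longrightarrow> pendant_edge k j \<in> fan_realization k r x"
  using assms by (auto simp: fan_realization_def fan_edges_def)

lemma fan_realization_flip:
  assumes "i \<noteq> triangle_index e"
  shows "e \<in> fan_realization k r (flip i x) \<longleftrightarrow> e \<in> fan_realization k r x"
proof -
  have "e \<noteq> hub_edge_a i" "e \<noteq> hub_edge_b i" using assms by auto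
  then show ?thesis unfolding fan_realization_def flip_def by auto
qed

lemma fan_vertex_cases:
  assumes "v \<in> fan_vertices k r"
  obtains "v = 0" | i where "i < k" "v = 2 * i + 1 \<or> v = 2 * i + 2" | j where "j < r" "v = 2 * k + 1 + j"
proof -
  consider "v = 0" | "0 < v" "v \<le> 2 * k" | "2 * k < v" by linarith
  then show ?thesis
  proof cases
    case 2
    then have "(v - 1) div 2 < k" "v = 2 * ((v - 1) div 2) + 1 \<or> v = 2 * ((v - 1) div 2) + 2"
      by auto
    then show ?thesis using that(2) by blast
  next
    case 3
    then show ?thesis using that(3)[of "v - 2 * k - 1"] assms by (auto simp: fan_vertices_def)
  qed (use that in auto)
qed

lemma fan_realization_reaches_hub:
  assumes x: "x \<subseteq> {..<k}" and v: "v \<in> fan_vertices k r"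
  shows "(v, 0) \<in> (adj (fan_realization k r x))\<^sup>*"
  using v
proof (cases rule: fan_vertex_cases)
  case (2 i)
  let ?F = "fan_realization k r x"
  have rim: "(2 * i + 1, 2 * i + 2) \<in> (adj ?F)\<^sup>*" "(2 * i + 2, 2 * i + 1) \<in> (adj ?F)\<^sup>*"
    using fan_realization_iff(3)[OF x 2(1)] edge_in_rtrancl_adj rtrancl_adj_sym
    unfolding rim_edge_def by blast+
  show ?thesis
  proof (cases "i \<in> x")
    case True
    then have "(2 * i + 1, 0) \<in> (adj ?F)\<^sup>*"
      using fan_realization_iff(1)[OF x 2(1)] edge_in_rtrancl_adj rtrancl_adj_sym
      unfolding hub_edge_a_def by blast
    then show ?thesis using 2 rim by (meson rtrancl_trans)
  next
    case False
    then have "(2 * i + 2, 0) \<in> (adj ?F)\<^sup>*"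
      using fan_realization_iff(2)[OF x 2(1)] edge_in_rtrancl_adj rtrancl_adj_sym
      unfolding hub_edge_b_def by blast
    then show ?thesis using 2 rim by (meson rtrancl_trans)
  qed
next
  case (3 j)
  then show ?thesis
    using fan_realization_iff(4)[OF x 3(1)] edge_in_rtrancl_adj rtrancl_adj_sym
    unfolding pendant_edge_def by blast
qed simp

lemma realizable_fan_realization:
  assumes "x \<subseteq> {..<k}"
  shows "realizable (fan_vertices k r) (fan_edges k r) (fan_realization k r x)"
  unfolding realizable_def connects_def
proof (intro conjI ballI)
  show "fan_realization k r x \<subseteq> fan_edges k r" unfolding fan_realization_def by blast
  fix u v assume "u \<in> fan_vertices k r" "v \<in> fan_vertices k r"
  then show "(u, v) \<in> (adj (fan_realization k r x))\<^sup>*"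
    using fan_realization_reaches_hub[OF assms] rtrancl_adj_sym by (meson rtrancl_trans)
qed

lemma fan_edge_at_triangle:
  assumes "e \<in> fan_edges k r" "i < k" "y \<in> e" "y \<in> {2 * i + 1, 2 * i + 2}"
  shows "e \<in> {hub_edge_a i, hub_edge_b i, rim_edge i}"
proof -
  have parity: "2 * a + 1 \<noteq> 2 * b + (2::nat)" for a b by presburger
  show ?thesis
    using assms parity unfolding fan_edges_def
    by (auto simp: hub_edge_a_def hub_edge_b_def rim_edge_def pendant_edge_def)
qed

text \<open>Without its two hub edges, triangle \<open>i\<close> would be cut off from the hub.\<close>
lemma fan_decode_spanning_tree:
  assumes x: "x \<subseteq> {..<k}"
    and T: "spanning_tree (fan_vertices k r) (fan_edges k r) T" "T \<subseteq> fan_realization k r x"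
  shows "fan_decode k T = x"
proof -
  have "hub_edge_a i \<in> T" if i: "i < k" "i \<in> x" for i
  proof (rule ccontr)
    assume a: "hub_edge_a i \<notin> T"
    have b: "hub_edge_b i \<notin> T" using T(2) fan_realization_iff(2)[OF x i(1)] i(2) by blast
    define X where "X = {2 * i + 1, 2 * i + 2}"
    have "adj T `` X \<subseteq> X"
    proof (intro subsetI, elim ImageE)
      fix z y assume "(y, z) \<in> adj T" "y \<in> X"
      then have "{y, z} \<in> T" "{y, z} \<in> {hub_edge_a i, hub_edge_b i, rim_edge i}"
        using T(1) fan_edge_at_triangle[of "{y, z}" k r i y] i(1)
        unfolding adj_def spanning_tree_def X_def by auto
      then show "z \<in> X"
        using a b \<open>y \<in> X\<close> unfolding X_def rim_edge_def by (auto simp: doubleton_eq_iff)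
    qed
    moreover have "(2 * i + 1, 0) \<in> (adj T)\<^sup>*"
      using T(1) i unfolding spanning_tree_def connects_def fan_vertices_def by auto
    ultimately have "0 \<in> X" using Image_closed_trancl[of "adj T" X] unfolding X_def by blast
    then show False unfolding X_def by simp
  qed
  moreover have "hub_edge_a i \<notin> T" if "i < k" "i \<notin> x" for i
    using T(2) fan_realization_iff(1)[OF x] that by blast
  ultimately show ?thesis using x unfolding fan_decode_def by auto
qed

lemma fan_depth_lower_bound:
  fixes p \<epsilon> :: real
  assumes p: "0 < p" "p < 1/2" and \<epsilon>: "0 < \<epsilon>" "\<epsilon> < 1"
    and t: "\<forall>R. realizable (fan_vertices k r) (fan_edges k r) R \<longrightarrow>
              fail_prob p (fan_vertices k r) (fan_edges k r) R t \<le> \<epsilon>"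
  shows "real k * (ln (real k) - ln (\<epsilon> / (1 - \<epsilon>))) \<le> real (depth t) * ln ((1 - p) / p)"
proof -
  interpret hypercube_instances p k "fan_realization k r" triangle_index "fan_decode k"
    using p fan_realization_flip by unfold_locales (auto simp: fan_decode_def)
  show ?thesis
  proof (rule depth_lower_bound[OF \<epsilon>])
    fix x assume x: "x \<subseteq> {..<k}"
    have "measure_pmf.prob (run p (fan_realization k r x) t) {T. fan_decode k T \<noteq> x}
            \<le> fail_prob p (fan_vertices k r) (fan_edges k r) (fan_realization k r x) t"
      unfolding fail_prob_def
      by (rule measure_pmf.finite_measure_mono) (use fan_decode_spanning_tree[OF x] in auto)
    also have "\<dots> \<le> \<epsilon>" using t realizable_fan_realization[OF x] by blast
    finally show "measure_pmf.prob (run p (fan_realization k r x) t) {T. fan_decode k T \<noteq> x} \<le> \<epsilon>" .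
  qed
qed

lemma ln_div_3_lower_bound:
  fixes L :: real
  assumes m: "16 \<le> m" "4 * exp (2 * L) \<le> real m"
  shows "real m * ln (real m) / 16 \<le> real (m div 3) * (ln (real (m div 3)) - L)"
proof -
  define k where "k = m div 3"
  have "m \<le> 3 * k + 2" unfolding k_def by simp
  then have k: "real m / 4 \<le> real k" using m(1) by linarith
  then have "exp (2 * L) \<le> real k" using m(2) by linarith
  then have L: "2 * L \<le> ln (real k)" using k m(1) by (simp add: ln_ge_iff)
  have "4 * real k \<le> real k * real k" using k m(1) by (intro mult_right_mono) auto
  then have "real m \<le> real k * real k" using k by linarith
  moreover have "0 < real k" using k m(1) by linarith
  ultimately have "ln (real m) \<le> ln (real k * real k)" using m(1) by simp
  then have "ln (real m) \<le> 2 * ln (real k)"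
    using \<open>0 < real k\<close> by (simp add: ln_mult)
  then have "real m / 4 * (ln (real m) / 4) \<le> real k * (ln (real k) - L)"
    using k L m(1) by (intro mult_mono) auto
  then show ?thesis unfolding k_def by simp
qed

lemma ex_hard_graph:
  fixes p \<epsilon> :: real
  assumes p: "0 < p" "p < 1/2" and \<epsilon>: "0 < \<epsilon>" "\<epsilon> < 1"
    and m: "nat \<lceil>4 * exp (2 * ln (\<epsilon> / (1 - \<epsilon>)))\<rceil> + 16 \<le> m"
  shows "\<exists>V E. simple_graph V E \<and> card E = m \<and>
           (\<forall>t. (\<forall>R. realizable V E R \<longrightarrow> fail_prob p V E R t \<le> \<epsilon>) \<longrightarrow>
                1 / (16 * ln ((1 - p) / p)) * real m * ln (real m) \<le> real (depth t))"
proof (intro exI conjI allI impI)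
  show "simple_graph (fan_vertices (m div 3) (m mod 3)) (fan_edges (m div 3) (m mod 3))"
    by (rule simple_graph_fan)
  show "card (fan_edges (m div 3) (m mod 3)) = m"
    by (simp add: card_fan_edges)
  fix t
  assume "\<forall>R. realizable (fan_vertices (m div 3) (m mod 3)) (fan_edges (m div 3) (m mod 3)) R \<longrightarrow>
            fail_prob p (fan_vertices (m div 3) (m mod 3)) (fan_edges (m div 3) (m mod 3)) R t \<le> \<epsilon>"
  then have "real (m div 3) * (ln (real (m div 3)) - ln (\<epsilon> / (1 - \<epsilon>)))
               \<le> real (depth t) * ln ((1 - p) / p)"
    by (rule fan_depth_lower_bound[OF p \<epsilon>])
  moreover have "real m * ln (real m) / 16
                   \<le> real (m div 3) * (ln (real (m div 3)) - ln (\<epsilon> / (1 - \<epsilon>)))"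
    using m by (intro ln_div_3_lower_bound) linarith+
  moreover have "0 < ln ((1 - p) / p)" using p by simp
  ultimately show "1 / (16 * ln ((1 - p) / p)) * real m * ln (real m) \<le> real (depth t)"
    by (simp add: field_simps)
qed

theorem theorem2:
  fixes p :: real
  assumes "0 < p" and "p < 1/2"
  shows "(\<exists>(A :: nat set \<Rightarrow> nat set set \<Rightarrow> nat set alg) (C :: real) (\<delta> :: nat \<Rightarrow> real).
            \<delta> \<longlonglongrightarrow> 0 \<and>
            (\<forall>V E. simple_graph V E \<and> card E \<ge> 2 \<longrightarrow>
               real (depth (A V E)) \<le> C * real (card E) * ln (real (card E))) \<and>
            (\<forall>V E R. simple_graph V E \<and> realizable V E R \<longrightarrow>
               fail_prob p V E R (A V E) \<le> \<delta> (card E)))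
       \<and> (\<forall>\<epsilon>::real. 0 < \<epsilon> \<and> \<epsilon> < 1 \<longrightarrow>
            (\<exists>c::real. c > 0 \<and> (\<exists>M::nat. \<forall>m\<ge>M. \<exists>V E.
               simple_graph V E \<and> card E = m \<and>
               (\<forall>t :: nat set alg.
                  (\<forall>R. realizable V E R \<longrightarrow> fail_prob p V E R t \<le> \<epsilon>) \<longrightarrow>
                  c * real m * ln (real m) \<le> real (depth t)))))"
  apply (intro conjI allI impI)
  subgoal
    using lim_1_over_n depth_majority_spanning_tree fail_prob_majority_spanning_tree
      simple_graph_finite_edges assms
    by (intro exI[of _ "majority_spanning_tree p"] exI[of _ "1 / (1/2 - p)\<^sup>2 + 1 / ln 2"]
        exI[of _ "\<lambda>m. 1 / real m"]) auto
  subgoal for \<epsilon>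
    using assms
    by (intro exI[of _ "1 / (16 * ln ((1 - p) / p))"] conjI
        exI[of _ "nat \<lceil>4 * exp (2 * ln (\<epsilon> / (1 - \<epsilon>)))\<rceil> + 16"] allI impI ex_hard_graph) auto
  done

end
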